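(* Let $(\mathfrak{g},[\cdot,\cdot]_{\mathfrak{g}},\phi_{\mathfrak{g}})$ be a finite-dimensional weakly involutive Hom-Lie algebra and $(V,\beta,\rho)$ a weakly involutive representation ($V$ finite-dimensional) satisfying $\rho(\phi_{\mathfrak g}(x))\beta^2=\rho(\phi_{\mathfrak g}(x))$ for all $x\in\mathfrak g$. Let $T:V\to\mathfrak g$ be an $\mathcal O$-operator associated to $(V,\beta,\rho)$. Then there is a coboundary Hom-Lie bialgebra structure on $\mathfrak g\ltimes_{\rho^\circ}V^*$ induced by $r=\overline T-\sigma(\overline T)$, i.e. with cobracket $\Delta(u)=(\mathrm{ad}_u\otimes\phi_d+\phi_d\otimes\mathrm{ad}_u)r$, where $\phi_d=\phi_{\mathfrak g}\oplus\beta^*$.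
   Context: A Hom-Lie algebra $(\mathfrak{h},[\cdot,\cdot]_{\mathfrak{h}},\phi_{\mathfrak{h}})$: skew-symmetric bilinear bracket and linear map with $\phi_{\mathfrak h}[x,y]=[\phi_{\mathfrak h}x,\phi_{\mathfrak h}y]$ and $[\phi_{\mathfrak h}(x),[y,z]]+[\phi_{\mathfrak h}(y),[z,x]]+[\phi_{\mathfrak h}(z),[x,y]]=0$; weakly involutive if $[\phi_{\mathfrak h}^2(x),y]=[x,y]$ for all $x,y$. $\mathrm{ad}_zy=[z,y]$. A representation $(V,\beta,\rho)$ of $\mathfrak g$: $\beta\in\mathfrak{gl}(V)$, $\rho:\mathfrak g\to\mathfrak{gl}(V)$ with $\rho(\phi_{\mathfrak g}(x))\beta=\beta\rho(x)$ and $\rho([x,y]_{\mathfrak g})\beta=\rho(\phi_{\mathfrak g}(x))\rho(y)-\rho(\phi_{\mathfrak g}(y))\rho(x)$; weakly involutive if $\rho(\phi_{\mathfrak g}^2(x))=\rho(x)$. $\rho^\circ:\mathfrak g\to\mathfrak{gl}(V^* )$, $\langle\rho^\circ(x)\xi,v\rangle=-\langle\xi,\rho(\phi_{\mathfrak g}(x))v\rangle$. $\mathfrak g\ltimes_{\rho^\circ}V^*$ is $\mathfrak g\oplus V^*$ with bracket $[(x,\xi),(y,\eta)]=([x,y]_{\mathfrak g},\rho^\circ(x)\eta-\rho^\circ(y)\xi)$ and twisting map $\phi_{\mathfrak g}\oplus\beta^*$. An $\mathcal O$-operator associated to $(V,\beta,\rho)$ is a linear $T:V\to\mathfrak g$ with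 $T\beta=\phi_{\mathfrak g}T$ and $[T(u),T(v)]_{\mathfrak g}=T(\rho(T(u))v-\rho(T(v))u)$. With a basis $\{v_i\}$ of $V$ and dual basis $\{v^i\}$, $\overline T=\sum_iv^i\otimes T(v_i)$; $\sigma$ is the flip. A Hom-Lie bialgebra $(\mathfrak h,\Delta)$ (finite-dimensional): a weakly involutive Hom-Lie algebra $\mathfrak h$ with $\Delta:\mathfrak h\to\mathfrak h\otimes\mathfrak h$ such that $\mathfrak h^*$ with bracket $\langle[a,b],x\rangle=\langle\Delta(x),a\otimes b\rangle$ and map $\phi_{\mathfrak h}^*$ is a weakly involutive Hom-Lie algebra and $\Delta[x,y]=\mathrm{ad}_{\phi_{\mathfrak h}(x)}\Delta(y)-\mathrm{ad}_{\phi_{\mathfrak h}(y)}\Delta(x)$, where $\mathrm{ad}_zt=(\mathrm{ad}_z\otimes\phi_{\mathfrak h}+\phi_{\mathfrak h}\otimes\mathrm{ad}_z)t$ for $t\in\mathfrak h\otimes\mathfrak h$. It is coboundary if $\Delta(x)=\mathrm{ad}_xr$ for some $r$ with $(\phi_{\mathfrak h}\otimes\mathrm{Id})r=(\mathrm{Id}\otimes\phi_{\mathfrak h})r$. *)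

theory Defs
  imports Main "HOL-Library.Function_Algebras"
begin

text \<open>Finite-dimensional vector spaces over a field 'k are represented in coordinates
  w.r.t. a fixed basis indexed by a finite type 'i: a vector is a function 'i \<Rightarrow> 'k,
  a dual vector is given by its coordinates in the dual basis (also 'i \<Rightarrow> 'k), and an
  element of the tensor square is its coefficient array 'i \<Rightarrow> 'i \<Rightarrow> 'k.\<close>

definition bvec :: "'i \<Rightarrow> 'i \<Rightarrow> 'k::zero_neq_one" where
  "bvec i = (\<lambda>j. if j = i then 1 else 0)"

definition lin :: "(('i \<Rightarrow> 'k::comm_ring_1) \<Rightarrow> ('j \<Rightarrow> 'k)) \<Rightarrow> bool" where
  "lin f \<longleftrightarrow> (\<forall>x y. f (x + y) = f x + f y) \<and> (\<forall>c x. f (\<lambda>i. c * x i) = (\<lambda>j. c * f x j))"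

definition bilin :: "(('i \<Rightarrow> 'k::comm_ring_1) \<Rightarrow> ('j \<Rightarrow> 'k) \<Rightarrow> ('l \<Rightarrow> 'k)) \<Rightarrow> bool" where
  "bilin b \<longleftrightarrow> (\<forall>x. lin (b x)) \<and> (\<forall>y. lin (\<lambda>x. b x y))"

definition hom_lie :: "(('i \<Rightarrow> 'k::comm_ring_1) \<Rightarrow> ('i \<Rightarrow> 'k) \<Rightarrow> ('i \<Rightarrow> 'k)) \<Rightarrow> (('i \<Rightarrow> 'k) \<Rightarrow> ('i \<Rightarrow> 'k)) \<Rightarrow> bool" where
  "hom_lie br phi \<longleftrightarrow> bilin br \<and> lin phi \<and>
     (\<forall>x y. br x y = - br y x) \<and>
     (\<forall>x y. phi (br x y) = br (phi x) (phi y)) \<and>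
     (\<forall>x y z. br (phi x) (br y z) + br (phi y) (br z x) + br (phi z) (br x y) = 0)"

definition weakly_inv :: "(('i \<Rightarrow> 'k) \<Rightarrow> ('i \<Rightarrow> 'k) \<Rightarrow> ('i \<Rightarrow> 'k)) \<Rightarrow> (('i \<Rightarrow> 'k) \<Rightarrow> ('i \<Rightarrow> 'k)) \<Rightarrow> bool" where
  "weakly_inv br phi \<longleftrightarrow> (\<forall>x y. br (phi (phi x)) y = br x y)"

definition hom_lie_rep ::
  "(('n \<Rightarrow> 'k::comm_ring_1) \<Rightarrow> ('n \<Rightarrow> 'k) \<Rightarrow> ('n \<Rightarrow> 'k)) \<Rightarrow> (('n \<Rightarrow> 'k) \<Rightarrow> ('n \<Rightarrow> 'k))
   \<Rightarrow> (('m \<Rightarrow> 'k) \<Rightarrow> ('m \<Rightarrow> 'k)) \<Rightarrow> (('n \<Rightarrow> 'k) \<Rightarrow> ('m \<Rightarrow> 'k) \<Rightarrow> ('m \<Rightarrow> 'k)) \<Rightarrow> bool" where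
  "hom_lie_rep br phi beta rho \<longleftrightarrow> lin beta \<and> bilin rho \<and>
     (\<forall>x v. rho (phi x) (beta v) = beta (rho x v)) \<and>
     (\<forall>x y v. rho (br x y) (beta v) = rho (phi x) (rho y v) - rho (phi y) (rho x v))"

definition weakly_inv_rep :: "(('n \<Rightarrow> 'k) \<Rightarrow> ('n \<Rightarrow> 'k)) \<Rightarrow> (('n \<Rightarrow> 'k) \<Rightarrow> ('m \<Rightarrow> 'k) \<Rightarrow> ('m \<Rightarrow> 'k)) \<Rightarrow> bool" where
  "weakly_inv_rep phi rho \<longleftrightarrow> (\<forall>x. rho (phi (phi x)) = rho x)"

definition O_operator ::
  "(('n \<Rightarrow> 'k::comm_ring_1) \<Rightarrow> ('n \<Rightarrow> 'k) \<Rightarrow> ('n \<Rightarrow> 'k)) \<Rightarrow> (('n \<Rightarrow> 'k) \<Rightarrow> ('n \<Rightarrow> 'k))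
   \<Rightarrow> (('m \<Rightarrow> 'k) \<Rightarrow> ('m \<Rightarrow> 'k)) \<Rightarrow> (('n \<Rightarrow> 'k) \<Rightarrow> ('m \<Rightarrow> 'k) \<Rightarrow> ('m \<Rightarrow> 'k))
   \<Rightarrow> (('m \<Rightarrow> 'k) \<Rightarrow> ('n \<Rightarrow> 'k)) \<Rightarrow> bool" where
  "O_operator br phi beta rho T \<longleftrightarrow> lin T \<and>
     (\<forall>v. T (beta v) = phi (T v)) \<and>
     (\<forall>u v. br (T u) (T v) = T (rho (T u) v - rho (T v) u))"

text \<open>Dual map f^* in dual-basis coordinates: <f^* a, x> = <a, f x>.\<close>
definition dual_map :: "(('i \<Rightarrow> 'k::comm_ring_1) \<Rightarrow> ('j \<Rightarrow> 'k)) \<Rightarrow> ('j \<Rightarrow> 'k) \<Rightarrow> ('i \<Rightarrow> 'k)" where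
  "dual_map f a = (\<lambda>i. \<Sum>j\<in>UNIV. a j * f (bvec i) j)"

definition rho_circ :: "(('n \<Rightarrow> 'k::comm_ring_1) \<Rightarrow> ('n \<Rightarrow> 'k)) \<Rightarrow> (('n \<Rightarrow> 'k) \<Rightarrow> ('m \<Rightarrow> 'k) \<Rightarrow> ('m \<Rightarrow> 'k))
   \<Rightarrow> ('n \<Rightarrow> 'k) \<Rightarrow> ('m \<Rightarrow> 'k) \<Rightarrow> ('m \<Rightarrow> 'k)" where
  "rho_circ phi rho x xi = - dual_map (rho (phi x)) xi"

text \<open>Semidirect product g \<ltimes>_{rho-circ} V^*, with basis indexed by 'n + 'm
  (Inl: basis of g, Inr: dual basis of V^*).\<close>
definition sd_br ::
  "(('n \<Rightarrow> 'k::comm_ring_1) \<Rightarrow> ('n \<Rightarrow> 'k) \<Rightarrow> ('n \<Rightarrow> 'k)) \<Rightarrow> (('n \<Rightarrow> 'k) \<Rightarrow> ('n \<Rightarrow> 'k))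
   \<Rightarrow> (('n \<Rightarrow> 'k) \<Rightarrow> ('m \<Rightarrow> 'k) \<Rightarrow> ('m \<Rightarrow> 'k))
   \<Rightarrow> ('n + 'm \<Rightarrow> 'k) \<Rightarrow> ('n + 'm \<Rightarrow> 'k) \<Rightarrow> ('n + 'm \<Rightarrow> 'k)" where
  "sd_br br phi rho w w' =
     case_sum (br (w \<circ> Inl) (w' \<circ> Inl))
              (rho_circ phi rho (w \<circ> Inl) (w' \<circ> Inr) - rho_circ phi rho (w' \<circ> Inl) (w \<circ> Inr))"

definition sd_phi :: "(('n \<Rightarrow> 'k::comm_ring_1) \<Rightarrow> ('n \<Rightarrow> 'k)) \<Rightarrow> (('m \<Rightarrow> 'k) \<Rightarrow> ('m \<Rightarrow> 'k))
   \<Rightarrow> ('n + 'm \<Rightarrow> 'k) \<Rightarrow> ('n + 'm \<Rightarrow> 'k)" where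
  "sd_phi phi beta w = case_sum (phi (w \<circ> Inl)) (dual_map beta (w \<circ> Inr))"

text \<open>Tensor square: (A \<otimes> B) t, ad_z t = (ad_z \<otimes> phi + phi \<otimes> ad_z) t, flip sigma.\<close>
definition tmap :: "(('i \<Rightarrow> 'k::comm_ring_1) \<Rightarrow> ('i \<Rightarrow> 'k)) \<Rightarrow> (('i \<Rightarrow> 'k) \<Rightarrow> ('i \<Rightarrow> 'k))
   \<Rightarrow> ('i \<Rightarrow> 'i \<Rightarrow> 'k) \<Rightarrow> ('i \<Rightarrow> 'i \<Rightarrow> 'k)" where
  "tmap A B t = (\<lambda>u v. \<Sum>p\<in>UNIV. \<Sum>q\<in>UNIV. t p q * A (bvec p) u * B (bvec q) v)"

definition tad :: "(('i \<Rightarrow> 'k::comm_ring_1) \<Rightarrow> ('i \<Rightarrow> 'k) \<Rightarrow> ('i \<Rightarrow> 'k)) \<Rightarrow> (('i \<Rightarrow> 'k) \<Rightarrow> ('i \<Rightarrow> 'k))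
   \<Rightarrow> ('i \<Rightarrow> 'k) \<Rightarrow> ('i \<Rightarrow> 'i \<Rightarrow> 'k) \<Rightarrow> ('i \<Rightarrow> 'i \<Rightarrow> 'k)" where
  "tad br phi z t = tmap (br z) phi t + tmap phi (br z) t"

definition flip :: "('i \<Rightarrow> 'i \<Rightarrow> 'k) \<Rightarrow> ('i \<Rightarrow> 'i \<Rightarrow> 'k)" where
  "flip t = (\<lambda>p q. t q p)"

text \<open>Bracket on the dual induced by Delta: <[a,b], x> = <Delta x, a \<otimes> b>.\<close>
definition dual_br :: "(('i \<Rightarrow> 'k::comm_ring_1) \<Rightarrow> ('i \<Rightarrow> 'i \<Rightarrow> 'k))
   \<Rightarrow> ('i \<Rightarrow> 'k) \<Rightarrow> ('i \<Rightarrow> 'k) \<Rightarrow> ('i \<Rightarrow> 'k)" where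
  "dual_br Delta a b = (\<lambda>i. \<Sum>p\<in>UNIV. \<Sum>q\<in>UNIV. Delta (bvec i) p q * a p * b q)"

definition hom_lie_bialg :: "(('i \<Rightarrow> 'k::comm_ring_1) \<Rightarrow> ('i \<Rightarrow> 'k) \<Rightarrow> ('i \<Rightarrow> 'k))
   \<Rightarrow> (('i \<Rightarrow> 'k) \<Rightarrow> ('i \<Rightarrow> 'k)) \<Rightarrow> (('i \<Rightarrow> 'k) \<Rightarrow> ('i \<Rightarrow> 'i \<Rightarrow> 'k)) \<Rightarrow> bool" where
  "hom_lie_bialg br phi Delta \<longleftrightarrow>
     hom_lie br phi \<and> weakly_inv br phi \<and>
     (\<forall>x y. Delta (x + y) = Delta x + Delta y) \<and>
     (\<forall>c x. Delta (\<lambda>i. c * x i) = (\<lambda>u v. c * Delta x u v)) \<and>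
     hom_lie (dual_br Delta) (dual_map phi) \<and> weakly_inv (dual_br Delta) (dual_map phi) \<and>
     (\<forall>x y. Delta (br x y) = tad br phi (phi x) (Delta y) - tad br phi (phi y) (Delta x))"

definition coboundary_by :: "(('i \<Rightarrow> 'k::comm_ring_1) \<Rightarrow> ('i \<Rightarrow> 'k) \<Rightarrow> ('i \<Rightarrow> 'k))
   \<Rightarrow> (('i \<Rightarrow> 'k) \<Rightarrow> ('i \<Rightarrow> 'k)) \<Rightarrow> ('i \<Rightarrow> 'i \<Rightarrow> 'k) \<Rightarrow> bool" where
  "coboundary_by br phi r \<longleftrightarrow>
     hom_lie_bialg br phi (\<lambda>x. tad br phi x r) \<and> tmap phi id r = tmap id phi r"

text \<open>T-bar = sum_i v^i \<otimes> T(v_i) in d \<otimes> d (first factor in V^*, second in g).\<close>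
definition Tbar :: "(('m \<Rightarrow> 'k::zero_neq_one) \<Rightarrow> ('n \<Rightarrow> 'k)) \<Rightarrow> ('n + 'm) \<Rightarrow> ('n + 'm) \<Rightarrow> 'k" where
  "Tbar T = (\<lambda>p q. case (p, q) of (Inr i, Inl j) \<Rightarrow> T (bvec i) j | _ \<Rightarrow> 0)"

end

theory Submission
  imports Defs
begin

text \<open>
  The bracket of \<open>d = g \<ltimes> V*\<close> is the semidirect product of \<open>g\<close> with the dual
  representation \<open>rho_circ\<close>, which is again a representation because \<open>g\<close> and \<open>rho\<close> are
  weakly involutive; the hypothesis \<open>rho (phi x) \<circ> beta\<^sup>2 = rho (phi x)\<close> makes \<open>d\<close>
  weakly involutive too.

  Since \<open>T \<circ> beta = phi \<circ> T\<close>, the tensor \<open>r = Tbar - flip Tbar\<close> is \<open>phi_d\<close>-symmetric, and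
  on any weakly involutive Hom-Lie algebra the cobracket \<open>x \<mapsto> ad_x r\<close> of a symmetric \<open>r\<close>
  satisfies the compatibility condition of a bialgebra by the Jacobi identity alone; no
  Yang-Baxter type equation is involved.

  What remains is that the dual bracket on \<open>d* = g* \<oplus> V\<close> is a weakly involutive Hom-Lie
  algebra. In coordinates its \<open>V\<close>-component is the descendent bracket
  \<open>rho (T u) w - rho (T w) u\<close> of the O-operator, whose Jacobi identity is the O-operator
  identity, and its \<open>g*\<close>-component is built from the transposes of the maps
  \<open>T_act w y = phi (T (rho (phi y) w)) + [phi (T w), y]\<close>; these form a representation of the
  descendent algebra, by the Jacobi identity of \<open>g\<close> combined with the O-operator identity.
\<close>

subsection \<open>Linear maps in coordinates\<close>

lemma sum_fun_apply: "sum g S x = (\<Sum>i\<in>S. g i x)"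
  by (induction S rule: infinite_finite_induct) auto

lemma lin_add: "lin f \<Longrightarrow> f (x + y) = f x + f y"
  by (simp add: lin_def)

lemma lin_smul: "lin f \<Longrightarrow> f (\<lambda>i. c * x i) = (\<lambda>j. c * f x j)"
  by (simp add: lin_def)

lemma lin_zero: "lin f \<Longrightarrow> f 0 = 0"
  using lin_smul[of f 0 0] by (simp add: zero_fun_def)

lemma lin_uminus: "lin f \<Longrightarrow> f (- x) = - f x"
  using lin_add[of f x "- x"] lin_zero[of f] by (simp add: eq_neg_iff_add_eq_0 add.commute)

lemma lin_diff: "lin f \<Longrightarrow> f (x - y) = f x - f y"
  using lin_add[of f x "- y"] lin_uminus[of f y] by simp

lemma lin_sum: "lin f \<Longrightarrow> f (sum g S) = (\<Sum>i\<in>S. f (g i))"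
  by (induction S rule: infinite_finite_induct) (auto simp: lin_zero lin_add)

lemma lin_comp: "lin f \<Longrightarrow> lin g \<Longrightarrow> lin (\<lambda>x. f (g x))"
  by (simp add: lin_def)

lemma lin_fadd: "lin f \<Longrightarrow> lin g \<Longrightarrow> lin (\<lambda>x. f x + g x)"
  by (simp add: lin_def fun_eq_iff algebra_simps)

lemma lin_fdiff: "lin f \<Longrightarrow> lin g \<Longrightarrow> lin (\<lambda>x. f x - g x)"
  by (simp add: lin_def fun_eq_iff algebra_simps)

lemma lin_dual_map: "lin (dual_map f)"
  by (simp add: lin_def dual_map_def fun_eq_iff sum.distrib sum_distrib_left algebra_simps)

lemma sum_bvec: "(\<Sum>j\<in>UNIV. bvec i j * (v::'i::finite \<Rightarrow> 'k::comm_ring_1) j) = v i"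
  by (simp add: bvec_def if_distrib[of "\<lambda>c. c * _"] cong: if_cong)

lemma vec_eq_sum_bvec: "(x::'i::finite \<Rightarrow> 'k::comm_ring_1) = (\<Sum>i\<in>UNIV. (\<lambda>j. x i * bvec i j))"
  by (rule ext) (simp add: sum_fun_apply bvec_def if_distrib[of "\<lambda>c. _ * c"] cong: if_cong)

lemma lin_expand:
  fixes f :: "('i::finite \<Rightarrow> 'k::comm_ring_1) \<Rightarrow> ('j \<Rightarrow> 'k)"
  assumes "lin f"
  shows "f x j = (\<Sum>i\<in>UNIV. x i * f (bvec i) j)"
proof -
  have "f x = f (\<Sum>i\<in>UNIV. (\<lambda>j. x i * bvec i j))"
    by (subst vec_eq_sum_bvec) rule
  also have "\<dots> = (\<Sum>i\<in>UNIV. (\<lambda>j. x i * f (bvec i) j))"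
    by (simp add: lin_sum[OF assms] lin_smul[OF assms])
  finally show ?thesis by (simp add: sum_fun_apply)
qed

definition pairing :: "('i::finite \<Rightarrow> 'k::comm_ring_1) \<Rightarrow> ('i \<Rightarrow> 'k) \<Rightarrow> 'k" where
  "pairing a v = (\<Sum>j\<in>UNIV. a j * v j)"

lemma pairing_commute: "pairing a b = pairing b a"
  by (simp add: pairing_def mult.commute)

lemma pairing_bvec_left [simp]: "pairing (bvec i) v = v i"
  by (simp add: pairing_def sum_bvec)

lemma pairing_bvec_right [simp]: "pairing v (bvec i) = v i"
  by (simp add: pairing_commute[of v])

lemma pairing_zero [simp]: "pairing a 0 = 0" "pairing 0 a = 0"
  by (simp_all add: pairing_def)

lemma pairing_linear:
  "pairing a (x + y) = pairing a x + pairing a y" "pairing (x + y) a = pairing x a + pairing y a"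
  "pairing a (x - y) = pairing a x - pairing a y" "pairing (x - y) a = pairing x a - pairing y a"
  "pairing a (- x) = - pairing a x" "pairing (- x) a = - pairing x a"
  by (simp_all add: pairing_def sum.distrib sum_subtractf sum_negf algebra_simps)

lemma dual_map_apply: "dual_map f a i = pairing a (f (bvec i))"
  by (simp add: dual_map_def pairing_def)

lemma pairing_dual_map:
  assumes "lin f"
  shows "pairing (dual_map f a) x = pairing a (f x)"
proof -
  have "pairing a (f x) = (\<Sum>j\<in>UNIV. \<Sum>i\<in>UNIV. a j * x i * f (bvec i) j)"
    by (simp add: pairing_def lin_expand[OF assms, of x] sum_distrib_left mult.assoc)
  also have "\<dots> = (\<Sum>i\<in>UNIV. \<Sum>j\<in>UNIV. a j * x i * f (bvec i) j)"
    by (rule sum.swap)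
  also have "\<dots> = pairing (dual_map f a) x"
    by (simp add: pairing_def dual_map_def sum_distrib_left sum_distrib_right ac_simps)
  finally show ?thesis by simp
qed

lemma dual_map_comp:
  fixes f :: "('i::finite \<Rightarrow> 'k::comm_ring_1) \<Rightarrow> ('j::finite \<Rightarrow> 'k)"
    and g :: "('j \<Rightarrow> 'k) \<Rightarrow> ('l::finite \<Rightarrow> 'k)"
  assumes "lin g"
  shows "dual_map f (dual_map g a) = dual_map (\<lambda>x. g (f x)) a"
  by (rule ext) (simp add: dual_map_apply pairing_dual_map[OF assms])

lemma dual_map_bvec:
  fixes f :: "('i::finite \<Rightarrow> 'k::comm_ring_1) \<Rightarrow> ('j::finite \<Rightarrow> 'k)"
  shows "dual_map f (bvec i) = (\<lambda>j. f (bvec j) i)"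
  by (simp add: dual_map_def sum_bvec fun_eq_iff)

lemma dual_map_dual_map:
  fixes f :: "('i::finite \<Rightarrow> 'k::comm_ring_1) \<Rightarrow> ('j::finite \<Rightarrow> 'k)"
  assumes "lin f"
  shows "dual_map (dual_map f) u = f u"
  by (rule ext) (simp add: dual_map_def[of "dual_map f"] dual_map_bvec lin_expand[OF assms, of u])

lemma dual_map_id: "dual_map id (a::'i::finite \<Rightarrow> 'k::comm_ring_1) = a"
  by (rule ext) (simp add: dual_map_apply)

lemma dual_map_linear:
  fixes a b :: "'i::finite \<Rightarrow> 'k::comm_ring_1"
  shows "dual_map f (a + b) = dual_map f a + dual_map f b"
    and "dual_map f (a - b) = dual_map f a - dual_map f b"
    and "dual_map f (- a) = - dual_map f a"
    and "dual_map f 0 = 0"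
    and "dual_map f (\<lambda>i. c * a i) = (\<lambda>j. c * dual_map f a j)"
  by (simp_all add: fun_eq_iff dual_map_def sum.distrib sum_subtractf sum_negf sum_distrib_left
      algebra_simps)

lemma dual_map_fun_linear:
  "dual_map (\<lambda>x. f x + g x) a = dual_map f a + dual_map g a"
  "dual_map (\<lambda>x. f x - g x) a = dual_map f a - dual_map g a"
  "dual_map (\<lambda>x. - f x) a = - dual_map f a"
  "dual_map (\<lambda>x. (\<lambda>i. c * f x i)) a = (\<lambda>i. c * dual_map f a i)"
  "dual_map (\<lambda>x. 0) a = 0"
  by (simp_all add: fun_eq_iff dual_map_def sum.distrib sum_subtractf sum_negf sum_distrib_left
      algebra_simps)

definition tpairing :: "('i::finite \<Rightarrow> 'i \<Rightarrow> 'k::comm_ring_1) \<Rightarrow> ('i \<Rightarrow> 'k) \<Rightarrow> ('i \<Rightarrow> 'k) \<Rightarrow> 'k" where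
  "tpairing t a b = (\<Sum>p\<in>UNIV. \<Sum>q\<in>UNIV. t p q * a p * b q)"

lemma sum_swap_pairs:
  "(\<Sum>u\<in>A. \<Sum>v\<in>B. \<Sum>p\<in>C. \<Sum>q\<in>D. F u v p q) = (\<Sum>p\<in>C. \<Sum>q\<in>D. \<Sum>u\<in>A. \<Sum>v\<in>B. F u v p q)"
proof -
  have "(\<Sum>u\<in>A. \<Sum>v\<in>B. \<Sum>p\<in>C. \<Sum>q\<in>D. F u v p q) = (\<Sum>u\<in>A. \<Sum>p\<in>C. \<Sum>q\<in>D. \<Sum>v\<in>B. F u v p q)"
    by (intro sum.cong refl) (subst sum.swap, rule sum.cong[OF refl], rule sum.swap)
  also have "\<dots> = (\<Sum>p\<in>C. \<Sum>q\<in>D. \<Sum>u\<in>A. \<Sum>v\<in>B. F u v p q)"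
    by (subst sum.swap, rule sum.cong[OF refl], rule sum.swap)
  finally show ?thesis .
qed

lemma tpairing_bvec [simp]: "tpairing t (bvec u) (bvec v) = t u v"
  by (simp add: tpairing_def bvec_def if_distrib[of "\<lambda>c. _ * c"] cong: if_cong)

lemma tensor_eqI: "(\<And>a b. tpairing s a b = tpairing t a b) \<Longrightarrow> s = t"
  by (intro ext) (metis tpairing_bvec)

lemma tpairing_linear:
  "tpairing (s + t) a b = tpairing s a b + tpairing t a b"
  "tpairing (s - t) a b = tpairing s a b - tpairing t a b"
  "tpairing t (a - a') b = tpairing t a b - tpairing t a' b"
  "tpairing t a (b - b') = tpairing t a b - tpairing t a b'"
  by (simp_all add: tpairing_def sum.distrib sum_subtractf algebra_simps)

lemma tpairing_flip: "tpairing (flip t) a b = tpairing t b a"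
  unfolding tpairing_def flip_def by (subst sum.swap) (simp add: ac_simps)

lemma tpairing_tmap: "tpairing (tmap A B t) a b = tpairing t (dual_map A a) (dual_map B b)"
proof -
  have "tpairing (tmap A B t) a b = (\<Sum>u\<in>UNIV. \<Sum>v\<in>UNIV. \<Sum>p\<in>UNIV. \<Sum>q\<in>UNIV.
           t p q * A (bvec p) u * B (bvec q) v * a u * b v)"
    by (simp add: tpairing_def tmap_def sum_distrib_right)
  also have "\<dots> = (\<Sum>p\<in>UNIV. \<Sum>q\<in>UNIV. \<Sum>u\<in>UNIV. \<Sum>v\<in>UNIV.
           t p q * A (bvec p) u * B (bvec q) v * a u * b v)"
    by (rule sum_swap_pairs)
  also have "\<dots> = tpairing t (dual_map A a) (dual_map B b)"
    by (simp add: tpairing_def dual_map_def sum_distrib_left sum_distrib_right ac_simps)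
  finally show ?thesis .
qed

lemma tpairing_tad:
  "tpairing (tad br phi z t) a b =
     tpairing t (dual_map (br z) a) (dual_map phi b) + tpairing t (dual_map phi a) (dual_map (br z) b)"
  by (simp add: tad_def tpairing_linear tpairing_tmap)

subsection \<open>Coboundary cobrackets\<close>

lemma tmap_symmetric_iff:
  "tmap phi id r = tmap id phi r \<longleftrightarrow>
     (\<forall>a b. tpairing r (dual_map phi a) b = tpairing r a (dual_map phi b))"
proof
  assume "tmap phi id r = tmap id phi r"
  then show "\<forall>a b. tpairing r (dual_map phi a) b = tpairing r a (dual_map phi b)"
    by (metis tpairing_tmap dual_map_id)
next
  assume "\<forall>a b. tpairing r (dual_map phi a) b = tpairing r a (dual_map phi b)"
  then show "tmap phi id r = tmap id phi r"
    by (intro tensor_eqI) (simp add: tpairing_tmap dual_map_id)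
qed

lemma tmap_fun_linear:
  "tmap (\<lambda>w. f w + g w) B t = tmap f B t + tmap g B t"
  "tmap A (\<lambda>w. f w + g w) t = tmap A f t + tmap A g t"
  "tmap (\<lambda>w. (\<lambda>i. c * f w i)) B t = (\<lambda>u v. c * tmap f B t u v)"
  "tmap A (\<lambda>w. (\<lambda>i. c * f w i)) t = (\<lambda>u v. c * tmap A f t u v)"
  by (simp_all add: tmap_def fun_eq_iff sum.distrib sum_distrib_left algebra_simps)

lemma tad_linear:
  assumes "\<And>y. lin (\<lambda>x. br x y)"
  shows "tad br phi (x + y) r = tad br phi x r + tad br phi y r"
    and "tad br phi (\<lambda>i. c * x i) r = (\<lambda>u v. c * tad br phi x r u v)"
proof -
  have "br (x + y) = (\<lambda>w. br x w + br y w)"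
    by (rule ext) (rule lin_add[OF assms])
  then show "tad br phi (x + y) r = tad br phi x r + tad br phi y r"
    by (simp add: tad_def tmap_fun_linear algebra_simps)
  have "br (\<lambda>i. c * x i) = (\<lambda>w. (\<lambda>i. c * br x w i))"
    by (rule ext) (rule lin_smul[OF assms])
  then show "tad br phi (\<lambda>i. c * x i) r = (\<lambda>u v. c * tad br phi x r u v)"
    by (simp only: tad_def tmap_fun_linear) (simp add: fun_eq_iff algebra_simps)
qed

lemma hom_lie_ad_phi_ad:
  assumes "hom_lie br phi"
  shows "(\<lambda>w. br (phi x) (br y w) - br (phi y) (br x w)) = (\<lambda>w. br (br x y) (phi w))"
proof
  fix w
  have lin_br: "lin (br z)" and skew: "br u v = - br v u" for z u v
    using assms unfolding hom_lie_def bilin_def by blast+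
  have "br (phi x) (br y w) + br (phi y) (br w x) + br (phi w) (br x y) = 0"
    using assms unfolding hom_lie_def by blast
  moreover have "br (phi y) (br w x) = - br (phi y) (br x w)"
    using skew[of w x] lin_uminus[OF lin_br] by simp
  moreover have "br (phi w) (br x y) = - br (br x y) (phi w)"
    by (rule skew)
  ultimately show "br (phi x) (br y w) - br (phi y) (br x w) = br (br x y) (phi w)"
    by (simp add: algebra_simps eq_neg_iff_add_eq_0)
qed

lemma weakly_inv_right:
  assumes "hom_lie br phi" and "weakly_inv br phi"
  shows "br x (phi (phi y)) = br x y"
  using assms unfolding hom_lie_def weakly_inv_def by metis

lemma tad_bracket:
  fixes br :: "('i::finite \<Rightarrow> 'k::comm_ring_1) \<Rightarrow> ('i \<Rightarrow> 'k) \<Rightarrow> ('i \<Rightarrow> 'k)"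
  assumes hl: "hom_lie br phi" and wi: "weakly_inv br phi"
    and sym: "tmap phi id r = tmap id phi r"
  shows "tad br phi (br x y) r = tad br phi (phi x) (tad br phi y r) - tad br phi (phi y) (tad br phi x r)"
proof (rule tensor_eqI)
  fix a b
  let ?D = dual_map and ?z = "br x y"
  have lin_br: "lin (br z)" and lin_phi: "lin phi" and phi_br: "phi (br u v) = br (phi u) (phi v)"
    for z u v
    using hl unfolding hom_lie_def bilin_def by blast+
  have phi_sym: "tpairing r (?D phi a') b' = tpairing r a' (?D phi b')" for a' b'
    using sym by (simp add: tmap_symmetric_iff)
  define mixed where
    "mixed x y = tpairing r (?D (\<lambda>w. br (phi x) (phi w)) a) (?D (\<lambda>w. br (phi y) (phi w)) b)" for x y
  define left where
    "left x y = tpairing r (?D (\<lambda>w. br (phi x) (br y w)) a) (?D (\<lambda>w. phi (phi w)) b)" for x y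
  define right where
    "right x y = tpairing r (?D (\<lambda>w. phi (phi w)) a) (?D (\<lambda>w. br (phi x) (br y w)) b)" for x y
  have expand: "tpairing (tad br phi (phi x) (tad br phi y r)) a b
      = left x y + mixed x y + mixed y x + right x y" for x y
  proof -
    have "(\<lambda>w. phi (br y w)) = (\<lambda>w. br (phi y) (phi w))" using phi_br by auto
    then show ?thesis
      unfolding tpairing_tad mixed_def left_def right_def
      by (simp add: dual_map_comp lin_br lin_phi add.assoc)
  qed
  have "left x y - left y x = tpairing r (?D (\<lambda>w. br ?z (phi w)) a) (?D (\<lambda>w. phi (phi w)) b)"
    unfolding left_def
    by (simp add: tpairing_linear dual_map_fun_linear flip: hom_lie_ad_phi_ad[OF hl])
  also have "\<dots> = tpairing r (?D (br ?z) a) (?D phi b)"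
    using phi_sym[of "?D phi (?D (br ?z) a)" "?D phi b"]
    by (simp add: dual_map_comp lin_br lin_phi weakly_inv_right[OF hl wi] lin_comp[OF lin_br lin_phi])
  finally have left: "left x y - left y x = \<dots>" .
  have "right x y - right y x = tpairing r (?D (\<lambda>w. phi (phi w)) a) (?D (\<lambda>w. br ?z (phi w)) b)"
    unfolding right_def
    by (simp add: tpairing_linear dual_map_fun_linear flip: hom_lie_ad_phi_ad[OF hl])
  also have "\<dots> = tpairing r (?D phi a) (?D (br ?z) b)"
    using phi_sym[of "?D phi a" "?D phi (?D (br ?z) b)"]
    by (simp add: dual_map_comp lin_br lin_phi weakly_inv_right[OF hl wi] lin_comp[OF lin_br lin_phi])
  finally have right: "right x y - right y x = \<dots>" .
  have "tpairing (tad br phi (phi x) (tad br phi y r) - tad br phi (phi y) (tad br phi x r)) a b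
      = (left x y + mixed x y + mixed y x + right x y) - (left y x + mixed y x + mixed x y + right y x)"
    by (simp only: tpairing_linear expand)
  then show "tpairing (tad br phi ?z r) a b =
    tpairing (tad br phi (phi x) (tad br phi y r) - tad br phi (phi y) (tad br phi x r)) a b"
    using left right by (simp add: tpairing_tad algebra_simps)
qed

lemma hom_lie_dual_brI:
  fixes Delta :: "('i::finite \<Rightarrow> 'k::comm_ring_1) \<Rightarrow> ('i \<Rightarrow> 'i \<Rightarrow> 'k)"
  assumes "\<And>a b. dual_br Delta a b = - dual_br Delta b a"
    and "\<And>a b. dual_map phi (dual_br Delta a b) = dual_br Delta (dual_map phi a) (dual_map phi b)"
    and "\<And>a b c. dual_br Delta (dual_map phi a) (dual_br Delta b c)
      + dual_br Delta (dual_map phi b) (dual_br Delta c a)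
      + dual_br Delta (dual_map phi c) (dual_br Delta a b) = 0"
  shows "hom_lie (dual_br Delta) (dual_map phi)"
proof -
  have "bilin (dual_br Delta)"
    unfolding bilin_def lin_def dual_br_def
    by (simp add: fun_eq_iff sum.distrib sum_distrib_left algebra_simps)
  then show ?thesis
    unfolding hom_lie_def using assms lin_dual_map by blast
qed

lemma coboundary_byI:
  fixes br :: "('i::finite \<Rightarrow> 'k::comm_ring_1) \<Rightarrow> ('i \<Rightarrow> 'k) \<Rightarrow> ('i \<Rightarrow> 'k)"
  assumes "hom_lie br phi" and "weakly_inv br phi" and "tmap phi id r = tmap id phi r"
    and "hom_lie (dual_br (\<lambda>x. tad br phi x r)) (dual_map phi)"
    and "weakly_inv (dual_br (\<lambda>x. tad br phi x r)) (dual_map phi)"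
  shows "coboundary_by br phi r"
proof -
  have "\<And>y. lin (\<lambda>x. br x y)"
    using assms(1) unfolding hom_lie_def bilin_def by blast
  then show ?thesis
    unfolding coboundary_by_def hom_lie_bialg_def
    using assms tad_linear tad_bracket by blast
qed

subsection \<open>Semidirect products\<close>

definition semidirect_br ::
  "(('n \<Rightarrow> 'k::comm_ring_1) \<Rightarrow> ('n \<Rightarrow> 'k) \<Rightarrow> ('n \<Rightarrow> 'k)) \<Rightarrow> (('n \<Rightarrow> 'k) \<Rightarrow> ('m \<Rightarrow> 'k) \<Rightarrow> ('m \<Rightarrow> 'k))
   \<Rightarrow> ('n + 'm \<Rightarrow> 'k) \<Rightarrow> ('n + 'm \<Rightarrow> 'k) \<Rightarrow> ('n + 'm \<Rightarrow> 'k)" where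
  "semidirect_br br sigma w w' =
     case_sum (br (w \<circ> Inl) (w' \<circ> Inl)) (sigma (w \<circ> Inl) (w' \<circ> Inr) - sigma (w' \<circ> Inl) (w \<circ> Inr))"

definition semidirect_phi ::
  "(('n \<Rightarrow> 'k::comm_ring_1) \<Rightarrow> ('n \<Rightarrow> 'k)) \<Rightarrow> (('m \<Rightarrow> 'k) \<Rightarrow> ('m \<Rightarrow> 'k))
   \<Rightarrow> ('n + 'm \<Rightarrow> 'k) \<Rightarrow> ('n + 'm \<Rightarrow> 'k)" where
  "semidirect_phi phi gamma w = case_sum (phi (w \<circ> Inl)) (gamma (w \<circ> Inr))"

lemma sd_br_eq_semidirect_br: "sd_br br phi rho = semidirect_br br (rho_circ phi rho)"
  by (simp add: fun_eq_iff sd_br_def semidirect_br_def)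

lemma sd_phi_eq_semidirect_phi: "sd_phi phi beta = semidirect_phi phi (dual_map beta)"
  by (simp add: fun_eq_iff sd_phi_def semidirect_phi_def)

lemma semidirect_br_comp:
  "semidirect_br br sigma w w' \<circ> Inl = br (w \<circ> Inl) (w' \<circ> Inl)"
  "semidirect_br br sigma w w' \<circ> Inr = sigma (w \<circ> Inl) (w' \<circ> Inr) - sigma (w' \<circ> Inl) (w \<circ> Inr)"
  by (simp_all add: semidirect_br_def case_sum_o_inj)

lemma semidirect_phi_comp:
  "semidirect_phi phi gamma w \<circ> Inl = phi (w \<circ> Inl)"
  "semidirect_phi phi gamma w \<circ> Inr = gamma (w \<circ> Inr)"
  by (simp_all add: semidirect_phi_def case_sum_o_inj)

lemma sum_fun_eqI: "v \<circ> Inl = v' \<circ> Inl \<Longrightarrow> v \<circ> Inr = v' \<circ> Inr \<Longrightarrow> v = v'"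
  by (rule ext) (metis comp_apply sum.exhaust)

lemma fun_arith_comp:
  "(v + v') \<circ> f = (v \<circ> f) + (v' \<circ> f)" "(v - v') \<circ> f = (v \<circ> f) - (v' \<circ> f)"
  "(- v) \<circ> f = - (v \<circ> f)" "0 \<circ> f = 0"
  by (simp_all add: fun_eq_iff)

lemma lin_case_sum: "lin F \<Longrightarrow> lin G \<Longrightarrow> lin (\<lambda>w. case_sum (F w) (G w))"
  unfolding lin_def by (auto simp: fun_eq_iff split: sum.split)

lemma lin_comp_Inl: "lin (\<lambda>w. w \<circ> Inl)" and lin_comp_Inr: "lin (\<lambda>w. w \<circ> Inr)"
  by (simp_all add: lin_def fun_eq_iff)

lemma bilin_semidirect_br:
  assumes "bilin br" and "bilin sigma"
  shows "bilin (semidirect_br br sigma)"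
proof -
  have lin_br: "lin (br x)" and lin_br_left: "lin (\<lambda>x. br x y)"
    and lin_sigma: "lin (sigma x)" and lin_sigma_left: "lin (\<lambda>x. sigma x v)" for x y v
    using assms unfolding bilin_def by blast+
  show ?thesis
    unfolding bilin_def semidirect_br_def[abs_def]
    by (intro allI conjI lin_case_sum lin_fdiff lin_comp[OF lin_br lin_comp_Inl]
        lin_comp[OF lin_br_left lin_comp_Inl] lin_comp[OF lin_sigma lin_comp_Inr]
        lin_comp[OF lin_sigma_left lin_comp_Inl])
qed

lemma lin_semidirect_phi: "lin phi \<Longrightarrow> lin gamma \<Longrightarrow> lin (semidirect_phi phi gamma)"
  unfolding semidirect_phi_def[abs_def]
  by (intro lin_case_sum lin_comp[OF _ lin_comp_Inl] lin_comp[OF _ lin_comp_Inr])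

lemma hom_lie_semidirect:
  assumes "hom_lie br phi" and "hom_lie_rep br phi gamma sigma"
  shows "hom_lie (semidirect_br br sigma) (semidirect_phi phi gamma)"
proof -
  have bilin_br: "bilin br" and lin_phi: "lin phi" and skew: "\<And>x y. br x y = - br y x"
    and mult: "\<And>x y. phi (br x y) = br (phi x) (phi y)"
    and jacobi: "\<And>x y z. br (phi x) (br y z) + br (phi y) (br z x) + br (phi z) (br x y) = 0"
    using assms(1) unfolding hom_lie_def by blast+
  have bilin_sigma: "bilin sigma" and lin_gamma: "lin gamma"
    and sigma_gamma: "\<And>x v. sigma (phi x) (gamma v) = gamma (sigma x v)"
    and sigma_br: "\<And>x y v. sigma (br x y) (gamma v) = sigma (phi x) (sigma y v) - sigma (phi y) (sigma x v)"
    using assms(2) unfolding hom_lie_rep_def by blast+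
  have lin_sigma: "\<And>x. lin (sigma x)"
    using bilin_sigma unfolding bilin_def by blast
  let ?br = "semidirect_br br sigma" and ?phi = "semidirect_phi phi gamma"
  have "bilin ?br" and "lin ?phi"
    by (simp_all add: bilin_semidirect_br bilin_br bilin_sigma lin_semidirect_phi lin_phi lin_gamma)
  moreover have "?br x y = - ?br y x" for x y
    by (rule sum_fun_eqI) (simp_all only: semidirect_br_comp fun_arith_comp skew[of "x \<circ> Inl"] minus_diff_eq)
  moreover have "?phi (?br x y) = ?br (?phi x) (?phi y)" for x y
    by (rule sum_fun_eqI)
      (simp_all only: semidirect_br_comp semidirect_phi_comp mult lin_diff[OF lin_gamma] sigma_gamma)
  moreover have "?br (?phi x) (?br y z) + ?br (?phi y) (?br z x) + ?br (?phi z) (?br x y) = 0" for x y z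
  proof (rule sum_fun_eqI)
    show "(?br (?phi x) (?br y z) + ?br (?phi y) (?br z x) + ?br (?phi z) (?br x y)) \<circ> Inl = 0 \<circ> Inl"
      by (simp only: fun_arith_comp semidirect_br_comp semidirect_phi_comp jacobi)
    show "(?br (?phi x) (?br y z) + ?br (?phi y) (?br z x) + ?br (?phi z) (?br x y)) \<circ> Inr = 0 \<circ> Inr"
      by (simp add: fun_arith_comp semidirect_br_comp semidirect_phi_comp sigma_br
          lin_diff[OF lin_sigma] algebra_simps)
  qed
  ultimately show ?thesis
    unfolding hom_lie_def by blast
qed

lemma weakly_inv_semidirect:
  assumes "weakly_inv br phi" and "weakly_inv_rep phi sigma"
    and "\<And>x v. sigma x (gamma (gamma v)) = sigma x v"
  shows "weakly_inv (semidirect_br br sigma) (semidirect_phi phi gamma)"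
  unfolding weakly_inv_def
proof (intro allI)
  fix x y
  show "semidirect_br br sigma (semidirect_phi phi gamma (semidirect_phi phi gamma x)) y
      = semidirect_br br sigma x y"
    using assms unfolding weakly_inv_def weakly_inv_rep_def
    by (intro sum_fun_eqI) (simp_all add: semidirect_br_comp semidirect_phi_comp)
qed

lemma sum_UNIV_Plus:
  "(\<Sum>p\<in>UNIV. f p) = (\<Sum>i\<in>UNIV. f (Inl i)) + (\<Sum>j\<in>UNIV. f (Inr j))"
  for f :: "'a::finite + 'b::finite \<Rightarrow> 'k::comm_monoid_add"
  using sum.Plus[of "UNIV::'a set" "UNIV::'b set" f] by simp

lemma pairing_case_sum:
  fixes a :: "'a::finite + 'b::finite \<Rightarrow> 'k::comm_ring_1"
  shows "pairing a (case_sum X Y) = pairing (a \<circ> Inl) X + pairing (a \<circ> Inr) Y"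
  by (simp add: pairing_def sum_UNIV_Plus)

lemma bvec_Plus:
  "bvec (Inl i) = case_sum (bvec i) (0::'b \<Rightarrow> 'k::zero_neq_one)"
  "bvec (Inr j) = case_sum (0::'a \<Rightarrow> 'k::zero_neq_one) (bvec j)"
  by (auto simp: fun_eq_iff bvec_def split: sum.split)

lemma dual_map_case_sum:
  fixes G :: "('i::finite \<Rightarrow> 'k::comm_ring_1) \<Rightarrow> ('a::finite \<Rightarrow> 'k)"
    and H :: "('i \<Rightarrow> 'k) \<Rightarrow> ('b::finite \<Rightarrow> 'k)"
  shows "dual_map (\<lambda>X. case_sum (G X) (H X)) a = dual_map G (a \<circ> Inl) + dual_map H (a \<circ> Inr)"
  by (rule ext) (simp add: dual_map_apply pairing_case_sum)

lemma dual_map_comp_Plus: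
  fixes F :: "('a::finite + 'b::finite \<Rightarrow> 'k::comm_ring_1) \<Rightarrow> ('c::finite \<Rightarrow> 'k)"
  shows "dual_map F a \<circ> Inl = dual_map (\<lambda>X. F (case_sum X 0)) a"
    and "dual_map F a \<circ> Inr = dual_map (\<lambda>X. F (case_sum 0 X)) a"
  by (simp_all add: fun_eq_iff dual_map_apply bvec_Plus)

lemma dual_map_semidirect_phi:
  fixes phi :: "('n::finite \<Rightarrow> 'k::comm_ring_1) \<Rightarrow> ('n \<Rightarrow> 'k)"
    and gamma :: "('m::finite \<Rightarrow> 'k) \<Rightarrow> ('m \<Rightarrow> 'k)"
  assumes "lin phi" and "lin gamma"
  shows "dual_map (semidirect_phi phi gamma) a \<circ> Inl = dual_map phi (a \<circ> Inl)"
    and "dual_map (semidirect_phi phi gamma) a \<circ> Inr = dual_map gamma (a \<circ> Inr)"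
  by (simp_all add: dual_map_comp_Plus semidirect_phi_def case_sum_o_inj
      lin_zero[OF assms(1)] lin_zero[OF assms(2)] dual_map_case_sum dual_map_fun_linear)

lemma dual_map_semidirect_br:
  fixes br :: "('n::finite \<Rightarrow> 'k::comm_ring_1) \<Rightarrow> ('n \<Rightarrow> 'k) \<Rightarrow> ('n \<Rightarrow> 'k)"
    and sigma :: "('n \<Rightarrow> 'k) \<Rightarrow> ('m::finite \<Rightarrow> 'k) \<Rightarrow> ('m \<Rightarrow> 'k)"
  assumes "\<And>x. lin (br x)" and "\<And>x. lin (sigma x)" and "\<And>v. lin (\<lambda>x. sigma x v)"
  shows "dual_map (semidirect_br br sigma x) a \<circ> Inl
      = dual_map (br (x \<circ> Inl)) (a \<circ> Inl) - dual_map (\<lambda>y. sigma y (x \<circ> Inr)) (a \<circ> Inr)"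
    and "dual_map (semidirect_br br sigma x) a \<circ> Inr = dual_map (sigma (x \<circ> Inl)) (a \<circ> Inr)"
  by (simp_all add: dual_map_comp_Plus semidirect_br_def case_sum_o_inj lin_zero[OF assms(1)]
      lin_zero[OF assms(2)] lin_zero[OF assms(3)] dual_map_case_sum dual_map_fun_linear)

subsection \<open>The dual representation and the semidirect product\<close>

locale weakly_involutive_rep =
  fixes br :: "('n::finite \<Rightarrow> 'k::comm_ring_1) \<Rightarrow> ('n \<Rightarrow> 'k) \<Rightarrow> ('n \<Rightarrow> 'k)"
    and phi :: "('n \<Rightarrow> 'k) \<Rightarrow> ('n \<Rightarrow> 'k)"
    and beta :: "('m::finite \<Rightarrow> 'k) \<Rightarrow> ('m \<Rightarrow> 'k)"
    and rho :: "('n \<Rightarrow> 'k) \<Rightarrow> ('m \<Rightarrow> 'k) \<Rightarrow> ('m \<Rightarrow> 'k)"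
  assumes hom_lie: "hom_lie br phi" and weakly_inv: "weakly_inv br phi"
    and rep: "hom_lie_rep br phi beta rho" and weakly_inv_rep: "weakly_inv_rep phi rho"
    and rho_phi_beta_beta: "\<And>x v. rho (phi x) (beta (beta v)) = rho (phi x) v"
begin

lemma lin_br: "lin (br x)" and lin_phi: "lin phi" and br_skew: "br x y = - br y x"
  and phi_br: "phi (br x y) = br (phi x) (phi y)"
  using hom_lie unfolding hom_lie_def bilin_def by blast+

lemma lin_beta: "lin beta" and lin_rho: "lin (rho x)" and lin_rho_left: "lin (\<lambda>x. rho x v)"
  and rho_phi_beta: "rho (phi x) (beta v) = beta (rho x v)"
  and rho_br_beta: "rho (br x y) (beta v) = rho (phi x) (rho y v) - rho (phi y) (rho x v)"
  using rep unfolding hom_lie_rep_def bilin_def by blast+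

lemma rho_phi_phi: "rho (phi (phi x)) = rho x"
  using weakly_inv_rep unfolding weakly_inv_rep_def by blast

lemma br_phi_phi_left: "br (phi (phi x)) y = br x y"
  using weakly_inv unfolding weakly_inv_def by blast

lemma phi_phi_br: "phi (phi (br x y)) = br x y"
  by (simp add: phi_br br_phi_phi_left weakly_inv_right[OF hom_lie weakly_inv])

lemma beta_beta_rho: "beta (beta (rho x v)) = rho x v"
proof -
  have "beta (beta (rho (phi z) v)) = rho (phi (phi (phi z))) (beta (beta v))" for z
    by (simp only: rho_phi_beta)
  also have "rho (phi (phi (phi z))) (beta (beta v)) = rho (phi z) v" for z
    by (simp only: rho_phi_beta_beta rho_phi_phi)
  finally show ?thesis
    using rho_phi_phi[of x] by metis
qed

lemma rho_beta_beta: "rho x (beta (beta v)) = rho x v"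
  using rho_phi_beta_beta[of "phi x" v] by (simp add: rho_phi_phi)

lemma lin_rho_circ: "lin (rho_circ phi rho x)"
  by (simp add: lin_def rho_circ_def dual_map_linear fun_eq_iff)

lemma lin_rho_circ_left: "lin (\<lambda>x. rho_circ phi rho x xi)"
proof -
  have add: "rho (phi (x + y)) = (\<lambda>v. rho (phi x) v + rho (phi y) v)" for x y
    by (rule ext) (simp add: lin_add[OF lin_phi] lin_add[OF lin_rho_left])
  have smul: "rho (phi (\<lambda>i. c * x i)) = (\<lambda>v. (\<lambda>i. c * rho (phi x) v i))" for x c
    by (rule ext) (simp add: lin_smul[OF lin_phi] lin_smul[OF lin_rho_left])
  show ?thesis
    by (simp add: lin_def rho_circ_def add smul dual_map_fun_linear fun_eq_iff)
qed

lemma rho_circ_phi_phi: "rho_circ phi rho (phi (phi x)) = rho_circ phi rho x"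
  by (simp add: fun_eq_iff rho_circ_def rho_phi_phi)

lemma rho_circ_dual_beta_dual_beta:
  "rho_circ phi rho x (dual_map beta (dual_map beta xi)) = rho_circ phi rho x xi"
  by (simp add: rho_circ_def dual_map_comp lin_beta lin_comp[OF lin_beta lin_beta] beta_beta_rho)

lemma hom_lie_rep_rho_circ: "hom_lie_rep br phi (dual_map beta) (rho_circ phi rho)"
  unfolding hom_lie_rep_def bilin_def
proof (intro conjI allI)
  show "lin (dual_map beta)" by (rule lin_dual_map)
  show "lin (rho_circ phi rho x)" for x by (rule lin_rho_circ)
  show "lin (\<lambda>x. rho_circ phi rho x xi)" for xi by (rule lin_rho_circ_left)
  show "rho_circ phi rho (phi x) (dual_map beta xi) = dual_map beta (rho_circ phi rho x xi)" for x xi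
    by (simp add: rho_circ_def dual_map_comp dual_map_linear lin_beta lin_rho rho_phi_beta rho_phi_phi)
  show "rho_circ phi rho (br x y) (dual_map beta xi)
      = rho_circ phi rho (phi x) (rho_circ phi rho y xi) - rho_circ phi rho (phi y) (rho_circ phi rho x xi)"
    for x y xi
  proof -
    have "beta (rho (phi (br x y)) v) = rho (phi x) (rho y v) - rho (phi y) (rho x v)" for v
      using rho_phi_beta[of "phi (br x y)" v] by (simp add: phi_phi_br rho_br_beta)
    then show ?thesis
      by (simp add: rho_circ_def dual_map_comp dual_map_linear dual_map_fun_linear lin_beta lin_rho
          rho_phi_phi)
  qed
qed

abbreviation d_br where "d_br \<equiv> sd_br br phi rho"
abbreviation d_phi where "d_phi \<equiv> sd_phi phi beta"

lemma hom_lie_sd: "hom_lie d_br d_phi"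
  unfolding sd_br_eq_semidirect_br sd_phi_eq_semidirect_phi
  by (rule hom_lie_semidirect[OF hom_lie hom_lie_rep_rho_circ])

lemma weakly_inv_sd: "weakly_inv d_br d_phi"
  unfolding sd_br_eq_semidirect_br sd_phi_eq_semidirect_phi
  by (rule weakly_inv_semidirect[OF weakly_inv])
    (simp_all add: weakly_inv_rep_def rho_circ_phi_phi rho_circ_dual_beta_dual_beta)

lemma dual_map_d_phi:
  "dual_map d_phi a \<circ> Inl = dual_map phi (a \<circ> Inl)"
  "dual_map d_phi a \<circ> Inr = beta (a \<circ> Inr)"
  by (simp_all add: sd_phi_eq_semidirect_phi dual_map_semidirect_phi lin_phi lin_dual_map
      dual_map_dual_map lin_beta)

lemma dual_map_d_br:
  "dual_map (d_br x) a \<circ> Inl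
     = dual_map (br (x \<circ> Inl)) (a \<circ> Inl) - dual_map (\<lambda>y. rho_circ phi rho y (x \<circ> Inr)) (a \<circ> Inr)"
  "dual_map (d_br x) a \<circ> Inr = - rho (phi (x \<circ> Inl)) (a \<circ> Inr)"
proof -
  have "dual_map (rho_circ phi rho y) = (\<lambda>a. - rho (phi y) a)" for y
    by (simp add: fun_eq_iff rho_circ_def[abs_def] dual_map_fun_linear dual_map_dual_map lin_rho)
  then show "dual_map (d_br x) a \<circ> Inl
     = dual_map (br (x \<circ> Inl)) (a \<circ> Inl) - dual_map (\<lambda>y. rho_circ phi rho y (x \<circ> Inr)) (a \<circ> Inr)"
    and "dual_map (d_br x) a \<circ> Inr = - rho (phi (x \<circ> Inl)) (a \<circ> Inr)"
    by (simp_all add: sd_br_eq_semidirect_br dual_map_semidirect_br lin_br lin_rho_circ lin_rho_circ_left)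
qed

lemma pairing_dual_map_rho_circ_left:
  "pairing (dual_map (\<lambda>y. rho_circ phi rho y xi) u) x = - pairing xi (rho (phi x) u)"
proof -
  have "pairing (dual_map (\<lambda>y. rho_circ phi rho y xi) u) x = pairing u (rho_circ phi rho x xi)"
    by (rule pairing_dual_map[OF lin_rho_circ_left])
  also have "\<dots> = - pairing (dual_map (rho (phi x)) xi) u"
    by (simp add: rho_circ_def pairing_linear pairing_commute[of u])
  finally show ?thesis
    by (simp add: pairing_dual_map[OF lin_rho])
qed

end

subsection \<open>The cobracket induced by an O-operator\<close>

lemma tpairing_Tbar:
  fixes T :: "('m::finite \<Rightarrow> 'k::comm_ring_1) \<Rightarrow> ('n::finite \<Rightarrow> 'k)"
  assumes "lin T"
  shows "tpairing (Tbar T) a b = pairing (b \<circ> Inl) (T (a \<circ> Inr))"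
proof -
  have "tpairing (Tbar T) a b = (\<Sum>i\<in>UNIV. \<Sum>j\<in>UNIV. T (bvec i) j * a (Inr i) * b (Inl j))"
    by (simp add: tpairing_def sum_UNIV_Plus Tbar_def)
  also have "\<dots> = (\<Sum>j\<in>UNIV. b (Inl j) * (\<Sum>i\<in>UNIV. (a \<circ> Inr) i * T (bvec i) j))"
    by (subst sum.swap) (simp add: sum_distrib_left ac_simps)
  also have "\<dots> = pairing (b \<circ> Inl) (T (a \<circ> Inr))"
    by (simp add: pairing_def lin_expand[OF assms, of "a \<circ> Inr"])
  finally show ?thesis .
qed

lemma bvec_comp_Plus:
  "bvec (Inl i) \<circ> Inl = bvec i" "bvec (Inl i) \<circ> Inr = 0"
  "bvec (Inr j) \<circ> Inl = 0" "bvec (Inr j) \<circ> Inr = bvec j"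
  by (simp_all add: bvec_Plus case_sum_o_inj)

locale O_operator_setting = weakly_involutive_rep br phi beta rho
  for br :: "('n::finite \<Rightarrow> 'k::comm_ring_1) \<Rightarrow> ('n \<Rightarrow> 'k) \<Rightarrow> ('n \<Rightarrow> 'k)"
    and phi and beta :: "('m::finite \<Rightarrow> 'k) \<Rightarrow> ('m \<Rightarrow> 'k)" and rho +
  fixes T :: "('m \<Rightarrow> 'k) \<Rightarrow> ('n \<Rightarrow> 'k)"
  assumes O_operator: "O_operator br phi beta rho T"
begin

lemma lin_T: "lin T" and T_beta: "T (beta v) = phi (T v)"
  and br_T_T: "br (T u) (T v) = T (rho (T u) v - rho (T v) u)"
  using O_operator unfolding O_operator_def by blast+

abbreviation r_T where "r_T \<equiv> Tbar T - flip (Tbar T)"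

abbreviation Delta where "Delta \<equiv> \<lambda>x. tad d_br d_phi x r_T"

lemma tpairing_r_T: "tpairing r_T a b = pairing (b \<circ> Inl) (T (a \<circ> Inr)) - pairing (a \<circ> Inl) (T (b \<circ> Inr))"
  by (simp add: tpairing_linear tpairing_flip tpairing_Tbar lin_T)

lemma r_T_symmetric: "tmap d_phi id r_T = tmap id d_phi r_T"
  unfolding tmap_symmetric_iff
  by (simp add: tpairing_r_T dual_map_d_phi pairing_dual_map lin_phi T_beta)

definition T_act :: "('m \<Rightarrow> 'k) \<Rightarrow> ('n \<Rightarrow> 'k) \<Rightarrow> ('n \<Rightarrow> 'k)" where
  "T_act w y = phi (T (rho (phi y) w)) + br (phi (T w)) y"

definition desc_br :: "('m \<Rightarrow> 'k) \<Rightarrow> ('m \<Rightarrow> 'k) \<Rightarrow> ('m \<Rightarrow> 'k)" where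
  "desc_br u w = rho (T u) w - rho (T w) u"

lemma lin_T_act: "lin (T_act w)"
proof -
  have "lin (\<lambda>y. phi (T (rho (phi y) w)) + br (phi (T w)) y)"
    by (intro lin_fadd lin_comp[OF lin_phi] lin_comp[OF lin_T] lin_comp[OF lin_rho_left lin_phi] lin_br)
  then show ?thesis
    by (simp add: T_act_def[abs_def])
qed

lemma tpairing_Delta:
  "tpairing (Delta x) a b =
     pairing (a \<circ> Inl) (T_act (b \<circ> Inr) (x \<circ> Inl)) - pairing (b \<circ> Inl) (T_act (a \<circ> Inr) (x \<circ> Inl))
     + pairing (x \<circ> Inr) (desc_br (a \<circ> Inr) (b \<circ> Inr))"
proof -
  define y xi al u ga w where "y = x \<circ> Inl" and "xi = x \<circ> Inr" and "al = a \<circ> Inl"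
    and "u = a \<circ> Inr" and "ga = b \<circ> Inl" and "w = b \<circ> Inr"
  note defs = y_def xi_def al_def u_def ga_def w_def
  note lin_simps = pairing_dual_map[OF lin_phi] pairing_dual_map[OF lin_br]
    pairing_dual_map_rho_circ_left pairing_linear lin_uminus[OF lin_T] lin_uminus[OF lin_phi]
  have rho_T_beta: "rho (phi (T (beta v))) = rho (T v)" for v
    by (simp add: T_beta rho_phi_phi)
  have br_T_beta: "br y (T (beta v)) = - br (phi (T v)) y" for v
    by (simp add: T_beta br_skew[of y])
  have "tpairing r_T (dual_map (d_br x) a) (dual_map d_phi b) =
      pairing (dual_map phi ga) (T (- rho (phi y) u))
      - pairing (dual_map (br y) al - dual_map (\<lambda>X. rho_circ phi rho X xi) u) (T (beta w))"
    by (simp only: tpairing_r_T dual_map_d_br dual_map_d_phi defs)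
  also have "\<dots> = - pairing ga (phi (T (rho (phi y) u))) + pairing al (br (phi (T w)) y)
      - pairing xi (rho (T w) u)"
    by (simp add: lin_simps rho_T_beta br_T_beta)
  finally have left: "tpairing r_T (dual_map (d_br x) a) (dual_map d_phi b) = \<dots>" .
  have "tpairing r_T (dual_map d_phi a) (dual_map (d_br x) b) =
      pairing (dual_map (br y) ga - dual_map (\<lambda>X. rho_circ phi rho X xi) w) (T (beta u))
      - pairing (dual_map phi al) (T (- rho (phi y) w))"
    by (simp only: tpairing_r_T dual_map_d_br dual_map_d_phi defs)
  also have "\<dots> = - pairing ga (br (phi (T u)) y) + pairing xi (rho (T u) w)
      + pairing al (phi (T (rho (phi y) w)))"
    by (simp add: lin_simps rho_T_beta br_T_beta)
  finally have right: "tpairing r_T (dual_map d_phi a) (dual_map (d_br x) b) = \<dots>" .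
  show ?thesis
    by (simp add: tpairing_tad left right T_act_def desc_br_def pairing_linear defs)
qed

lemma phi_phi_T_rho: "phi (phi (T (rho x v))) = T (rho x v)"
  by (simp only: T_beta[symmetric] beta_beta_rho)

lemma T_act_beta: "T_act (beta z) y = T (rho y z) + br (T z) y"
proof -
  have "T_act (beta z) y = phi (T (beta (rho y z))) + br (phi (phi (T z))) y"
    by (simp only: T_act_def rho_phi_beta T_beta)
  then show ?thesis
    by (simp only: T_beta br_phi_phi_left phi_phi_T_rho)
qed

lemma phi_T_act: "phi (T_act v y) = T (rho (phi y) v) + br (phi (phi (T v))) (phi y)"
  by (simp only: T_act_def lin_add[OF lin_phi] phi_phi_T_rho phi_br)

lemma T_act_eq: "T_act w y = T (rho y (beta w)) + br (phi (T w)) y"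
proof -
  have "phi (T (rho (phi y) w)) = T (rho (phi (phi y)) (beta w))"
    by (simp only: T_beta rho_phi_beta)
  then show ?thesis
    by (simp only: T_act_def rho_phi_phi)
qed

lemma T_act_phi: "T_act w (phi y) = phi (T_act (beta w) y)"
proof -
  have "phi (T_act (beta w) y) = phi (T (rho y w)) + br (phi (T w)) (phi y)"
    by (simp only: T_act_beta lin_add[OF lin_phi] phi_br)
  moreover have "T_act w (phi y) = phi (T (rho y w)) + br (phi (T w)) (phi y)"
    by (simp only: T_act_def rho_phi_phi)
  ultimately show ?thesis by simp
qed

lemma phi_phi_T_act: "phi (phi (T_act w y)) = T_act w y"
  by (simp only: T_act_def lin_add[OF lin_phi] phi_phi_br phi_phi_T_rho)

lemma T_act_beta_beta: "T_act (beta (beta u)) = T_act u"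
  by (rule ext) (simp only: T_act_def T_beta rho_beta_beta br_phi_phi_left)

lemma T_act_T_act_beta:
  "T_act w (T_act (beta z) y) = T (rho (phi (T z)) (rho y w)) - T (rho (phi y) (rho (T z) w))
     + T (rho (phi (T w)) (rho y z)) + br (phi (T w)) (br (T z) y)"
proof -
  have O_identity: "br (phi (T w)) (T (rho y z)) = T (rho (phi (T w)) (rho y z)) - T (rho (T (rho y z)) (beta w))"
    using br_T_T[of "beta w" "rho y z"] by (simp only: T_beta lin_diff[OF lin_T])
  have "T_act w (T_act (beta z) y)
      = T (rho (T (rho y z) + br (T z) y) (beta w)) + br (phi (T w)) (T (rho y z) + br (T z) y)"
    unfolding T_act_beta by (rule T_act_eq)
  also have "\<dots> = T (rho (T (rho y z)) (beta w)) + T (rho (phi (T z)) (rho y w))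
      - T (rho (phi y) (rho (T z) w)) + br (phi (T w)) (T (rho y z)) + br (phi (T w)) (br (T z) y)"
    by (simp only: lin_add[OF lin_rho_left] rho_br_beta lin_add[OF lin_T] lin_diff[OF lin_T]
        lin_add[OF lin_br]) (simp add: algebra_simps)
  finally show ?thesis
    by (simp only: O_identity) (simp add: algebra_simps)
qed

lemma phi_T_act_desc_br:
  "phi (T_act (desc_br w z) y) = T_act w (T_act (beta z) y) - T_act z (T_act (beta w) y)"
proof -
  have jacobi: "br (phi (T w)) (br (T z) y) - br (phi (T z)) (br (T w) y) = br (br (T w) (T z)) (phi y)"
    using fun_cong[OF hom_lie_ad_phi_ad[OF hom_lie, of "T w" "T z"], of y] by simp
  have "phi (T_act (desc_br w z) y) = T (rho (phi y) (rho (T w) z)) - T (rho (phi y) (rho (T z) w))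
      + br (br (T w) (T z)) (phi y)"
    by (simp only: phi_T_act desc_br_def br_T_T[symmetric] phi_phi_br)
      (simp only: lin_diff[OF lin_rho] lin_diff[OF lin_T])
  also have "\<dots> = T_act w (T_act (beta z) y) - T_act z (T_act (beta w) y)"
    by (simp only: T_act_T_act_beta jacobi[symmetric]) (simp add: algebra_simps)
  finally show ?thesis .
qed

lemma desc_br_jacobi:
  "desc_br (beta u) (desc_br w z) + desc_br (beta w) (desc_br z u) + desc_br (beta z) (desc_br u w) = 0"
  unfolding desc_br_def
  by (simp only: T_beta br_T_T[symmetric] rho_br_beta lin_diff[OF lin_rho]) (simp add: algebra_simps)

lemma dual_br_Delta:
  "dual_br Delta a b = case_sum
     (dual_map (T_act (b \<circ> Inr)) (a \<circ> Inl) - dual_map (T_act (a \<circ> Inr)) (b \<circ> Inl))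
     (desc_br (a \<circ> Inr) (b \<circ> Inr))"
proof
  fix k
  have "dual_br Delta a b k = tpairing (Delta (bvec k)) a b"
    by (simp only: dual_br_def tpairing_def)
  then show "dual_br Delta a b k = case_sum
     (dual_map (T_act (b \<circ> Inr)) (a \<circ> Inl) - dual_map (T_act (a \<circ> Inr)) (b \<circ> Inl))
     (desc_br (a \<circ> Inr) (b \<circ> Inr)) k"
    by (cases k) (simp_all add: tpairing_Delta bvec_comp_Plus dual_map_apply lin_zero[OF lin_T_act])
qed

lemma dual_br_Delta_comp:
  "dual_br Delta a b \<circ> Inl = dual_map (T_act (b \<circ> Inr)) (a \<circ> Inl) - dual_map (T_act (a \<circ> Inr)) (b \<circ> Inl)"
  "dual_br Delta a b \<circ> Inr = desc_br (a \<circ> Inr) (b \<circ> Inr)"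
  by (simp_all only: dual_br_Delta case_sum_o_inj)

lemma dual_br_Delta_skew: "dual_br Delta a b = - dual_br Delta b a"
  by (rule sum_fun_eqI) (simp_all only: dual_br_Delta_comp fun_arith_comp minus_diff_eq desc_br_def)

lemma dual_map_dual_br_Delta:
  "dual_map d_phi (dual_br Delta a b) = dual_br Delta (dual_map d_phi a) (dual_map d_phi b)"
proof (rule sum_fun_eqI)
  have "dual_map phi (dual_map (T_act w) al) = dual_map (T_act (beta w)) (dual_map phi al)" for w al
    by (simp add: dual_map_comp lin_T_act lin_phi T_act_phi)
  then show "dual_map d_phi (dual_br Delta a b) \<circ> Inl
      = dual_br Delta (dual_map d_phi a) (dual_map d_phi b) \<circ> Inl"
    by (simp only: dual_br_Delta_comp dual_map_d_phi dual_map_linear)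
  have "beta (desc_br u w) = desc_br (beta u) (beta w)" for u w
    by (simp only: desc_br_def T_beta rho_phi_beta lin_diff[OF lin_beta])
  then show "dual_map d_phi (dual_br Delta a b) \<circ> Inr
      = dual_br Delta (dual_map d_phi a) (dual_map d_phi b) \<circ> Inr"
    by (simp only: dual_br_Delta_comp dual_map_d_phi)
qed

lemma dual_br_Delta_weakly_inv: "dual_br Delta (dual_map d_phi (dual_map d_phi a)) b = dual_br Delta a b"
proof (rule sum_fun_eqI)
  have "dual_map (T_act w) (dual_map phi (dual_map phi al)) = dual_map (T_act w) al" for w al
    by (simp add: dual_map_comp lin_phi lin_comp[OF lin_phi lin_phi] phi_phi_T_act)
  then show "dual_br Delta (dual_map d_phi (dual_map d_phi a)) b \<circ> Inl = dual_br Delta a b \<circ> Inl"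
    by (simp only: dual_br_Delta_comp dual_map_d_phi T_act_beta_beta)
  show "dual_br Delta (dual_map d_phi (dual_map d_phi a)) b \<circ> Inr = dual_br Delta a b \<circ> Inr"
    by (simp only: dual_br_Delta_comp dual_map_d_phi desc_br_def T_beta rho_phi_phi rho_beta_beta)
qed

lemma dual_br_Delta_jacobi:
  "dual_br Delta (dual_map d_phi a) (dual_br Delta b c) + dual_br Delta (dual_map d_phi b) (dual_br Delta c a)
   + dual_br Delta (dual_map d_phi c) (dual_br Delta a b) = 0"
proof (rule sum_fun_eqI)
  show "(dual_br Delta (dual_map d_phi a) (dual_br Delta b c) + dual_br Delta (dual_map d_phi b) (dual_br Delta c a)
      + dual_br Delta (dual_map d_phi c) (dual_br Delta a b)) \<circ> Inr = 0 \<circ> Inr"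
    using desc_br_jacobi[of "a \<circ> Inr" "b \<circ> Inr" "c \<circ> Inr"]
    by (simp only: fun_arith_comp dual_br_Delta_comp dual_map_d_phi)
  have component: "(dual_br Delta (dual_map d_phi p) (dual_br Delta q s) \<circ> Inl) i
     = pairing (p \<circ> Inl) (T_act (q \<circ> Inr) (T_act (beta (s \<circ> Inr)) (bvec i))
                           - T_act (s \<circ> Inr) (T_act (beta (q \<circ> Inr)) (bvec i)))
       - pairing (q \<circ> Inl) (T_act (s \<circ> Inr) (T_act (beta (p \<circ> Inr)) (bvec i)))
       + pairing (s \<circ> Inl) (T_act (q \<circ> Inr) (T_act (beta (p \<circ> Inr)) (bvec i)))" for p q s i
    by (simp add: dual_br_Delta_comp dual_map_d_phi dual_map_apply pairing_dual_map[OF lin_phi]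
        pairing_dual_map[OF lin_T_act] pairing_linear phi_T_act_desc_br)
  show "(dual_br Delta (dual_map d_phi a) (dual_br Delta b c) + dual_br Delta (dual_map d_phi b) (dual_br Delta c a)
      + dual_br Delta (dual_map d_phi c) (dual_br Delta a b)) \<circ> Inl = 0 \<circ> Inl"
    by (rule ext) (simp only: fun_arith_comp plus_fun_apply component, simp add: pairing_linear algebra_simps)
qed

lemma coboundary_sd: "coboundary_by d_br d_phi r_T"
  using hom_lie_sd weakly_inv_sd r_T_symmetric
proof (rule coboundary_byI)
  show "hom_lie (dual_br Delta) (dual_map d_phi)"
    using dual_br_Delta_skew dual_map_dual_br_Delta dual_br_Delta_jacobi by (rule hom_lie_dual_brI)
  show "weakly_inv (dual_br Delta) (dual_map d_phi)"
    unfolding weakly_inv_def using dual_br_Delta_weakly_inv by blast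
qed

end

theorem corollary5p10:
  fixes br :: "('n::finite \<Rightarrow> 'k::field) \<Rightarrow> ('n \<Rightarrow> 'k) \<Rightarrow> ('n \<Rightarrow> 'k)"
    and phi :: "('n \<Rightarrow> 'k) \<Rightarrow> ('n \<Rightarrow> 'k)"
    and beta :: "('m::finite \<Rightarrow> 'k) \<Rightarrow> ('m \<Rightarrow> 'k)"
    and rho :: "('n \<Rightarrow> 'k) \<Rightarrow> ('m \<Rightarrow> 'k) \<Rightarrow> ('m \<Rightarrow> 'k)"
    and T :: "('m \<Rightarrow> 'k) \<Rightarrow> ('n \<Rightarrow> 'k)"
  assumes "hom_lie br phi" and "weakly_inv br phi"
    and "hom_lie_rep br phi beta rho" and "weakly_inv_rep phi rho"
    and "\<forall>x v. rho (phi x) (beta (beta v)) = rho (phi x) v"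
    and "O_operator br phi beta rho T"
  shows "coboundary_by (sd_br br phi rho) (sd_phi phi beta) (Tbar T - flip (Tbar T))"
proof -
  interpret O_operator_setting br phi beta rho T
    using assms by unfold_locales auto
  show ?thesis by (rule coboundary_sd)
qed

end
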